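(* For every $\epsilon>0$ the following two limits hold: $$\lim_{N\to\infty}\Pr\left(\frac1{N^2}\left|\log\frac{P_{Y^{N\times N}}(Y^{N\times N})}{P_{Y^{N\times N}|X_{sf},\Phi}(Y^{N\times N}|X_{sf},\Phi)}\right|<\frac\epsilon2\right)=1,$$ $$\lim_{N\to\infty}\Pr\left(\frac1{N^2}\left|\log\frac{P_{Y^{N\times N}|X^{N\times N}}(Y^{N\times N}|X^{N\times N})}{P_{Y^{N\times N}|X^{N\times N},\Phi}(Y^{N\times N}|X^{N\times N},\Phi)}\right|<\frac\epsilon2\right)=1.$$
   Context: ReRAM channel model. Fix resistances $0<R_1<R_0$ and $R_s>0$, and for $x,v\in\{0,1\}$ define $R_x(v)=\bigl(1/R_x+(1-x)v/R_s\bigr)^{-1}$. Fix $\sigma>0$, an integer $K\ge0$, $0<q<1$, and a probability vector $(p_0,\dots,p_K)$. For each $N$, the input $X^{N\times N}$ has i.i.d. Bernoulli$(q)$ entries. The SF pattern $\Phi\subseteq\{1,\dots,N\}^2$ is random with $\Pr(\Phi=\varphi)=p_k/\binom{N^2}{k}$ when $|\varphi|=k\le K$. The noise $Z_{m,n}\sim\mathcal N(0,\sigma^2)$ is i.i.d. The three objects $X$, $\Phi$ and $Z$ are mutually independent. The output is $$Y_{m,n}=R_{X_{m,n}}\Bigl(\bigvee_{(i,j)\in\Phi}X_{m,j}X_{i,j}X_{i,n}\Bigr)+Z_{m,n}.$$ For $(i,j)\in\Phi$, row $i$ is called an SF row and column $j$ an SF column. $X_{sf}$ denotes the collection of entries of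 $X^{N\times N}$ lying in SF rows or SF columns. The notation $P_{Y|X_{sf},\Phi}$, $P_{Y|X}$, $P_{Y|X,\Phi}$ and $P_Y$ denotes the corresponding (conditional) densities of $Y^{N\times N}$, and $\log$ is the natural logarithm. *)

theory Defs
  imports "HOL-Probability.Probability"
begin

text \<open>Channel parameters: R0 R1 Rs (resistances), sigma (noise std), q (Bernoulli
  parameter), K (max number of SF cells), p (probability vector p 0 .. p K).\<close>

definition grid :: "nat \<Rightarrow> (nat \<times> nat) set" where
  "grid N = {1..N} \<times> {1..N}"

definition inputs :: "nat \<Rightarrow> ((nat \<times> nat) \<Rightarrow> bool) set" where
  "inputs N = PiE (grid N) (\<lambda>_. UNIV)"

definition patterns :: "nat \<Rightarrow> nat \<Rightarrow> (nat \<times> nat) set set" where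
  "patterns K N = {\<phi>. \<phi> \<subseteq> grid N \<and> card \<phi> \<le> K}"

definition bern :: "real \<Rightarrow> bool \<Rightarrow> real" where
  "bern q b = (if b then q else 1 - q)"

definition prX :: "real \<Rightarrow> nat \<Rightarrow> ((nat \<times> nat) \<Rightarrow> bool) \<Rightarrow> real" where
  "prX q N x = (\<Prod>c\<in>grid N. bern q (x c))"

definition prPhi :: "(nat \<Rightarrow> real) \<Rightarrow> nat \<Rightarrow> (nat \<times> nat) set \<Rightarrow> real" where
  "prPhi p N \<phi> = p (card \<phi>) / real ((N^2) choose (card \<phi>))"

definition sneak :: "(nat \<times> nat) set \<Rightarrow> ((nat \<times> nat) \<Rightarrow> bool) \<Rightarrow> nat \<times> nat \<Rightarrow> bool" where
  "sneak \<phi> x c = (\<exists>(i,j)\<in>\<phi>. x (fst c, j) \<and> x (i, j) \<and> x (i, snd c))"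

definition Rcell :: "real \<Rightarrow> real \<Rightarrow> real \<Rightarrow> bool \<Rightarrow> bool \<Rightarrow> real" where
  "Rcell R0 R1 Rs b v =
     inverse (inverse (if b then R1 else R0) + (if \<not> b \<and> v then inverse Rs else 0))"

definition cellmean :: "real \<Rightarrow> real \<Rightarrow> real \<Rightarrow> (nat \<times> nat) set \<Rightarrow> ((nat \<times> nat) \<Rightarrow> bool)
    \<Rightarrow> nat \<times> nat \<Rightarrow> real" where
  "cellmean R0 R1 Rs \<phi> x c = Rcell R0 R1 Rs (x c) (sneak \<phi> x c)"

definition dYXPhi :: "real \<Rightarrow> real \<Rightarrow> real \<Rightarrow> real \<Rightarrow> nat \<Rightarrow> ((nat \<times> nat) \<Rightarrow> real)
    \<Rightarrow> ((nat \<times> nat) \<Rightarrow> bool) \<Rightarrow> (nat \<times> nat) set \<Rightarrow> real" where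
  "dYXPhi R0 R1 Rs \<sigma> N y x \<phi> =
     (\<Prod>c\<in>grid N. normal_density (cellmean R0 R1 Rs \<phi> x c) \<sigma> (y c))"

definition dYX :: "real \<Rightarrow> real \<Rightarrow> real \<Rightarrow> real \<Rightarrow> nat \<Rightarrow> (nat \<Rightarrow> real) \<Rightarrow> nat
    \<Rightarrow> ((nat \<times> nat) \<Rightarrow> real) \<Rightarrow> ((nat \<times> nat) \<Rightarrow> bool) \<Rightarrow> real" where
  "dYX R0 R1 Rs \<sigma> K p N y x =
     (\<Sum>\<phi>\<in>patterns K N. prPhi p N \<phi> * dYXPhi R0 R1 Rs \<sigma> N y x \<phi>)"

definition dY :: "real \<Rightarrow> real \<Rightarrow> real \<Rightarrow> real \<Rightarrow> real \<Rightarrow> nat \<Rightarrow> (nat \<Rightarrow> real) \<Rightarrow> nat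
    \<Rightarrow> ((nat \<times> nat) \<Rightarrow> real) \<Rightarrow> real" where
  "dY R0 R1 Rs \<sigma> q K p N y =
     (\<Sum>x\<in>inputs N. prX q N x * dYX R0 R1 Rs \<sigma> K p N y x)"

definition sfcells :: "nat \<Rightarrow> (nat \<times> nat) set \<Rightarrow> (nat \<times> nat) set" where
  "sfcells N \<phi> = {c\<in>grid N. \<exists>(i,j)\<in>\<phi>. fst c = i \<or> snd c = j}"

text \<open>P_{Y|X_sf,Phi}(y | x_sf, phi): average of P_{Y|X,Phi} over the entries of X
  outside SF rows/columns, which given (X_sf, Phi) are still i.i.d. Bernoulli(q).\<close>
definition dYXsfPhi :: "real \<Rightarrow> real \<Rightarrow> real \<Rightarrow> real \<Rightarrow> real \<Rightarrow> nat
    \<Rightarrow> ((nat \<times> nat) \<Rightarrow> real) \<Rightarrow> ((nat \<times> nat) \<Rightarrow> bool) \<Rightarrow> (nat \<times> nat) set \<Rightarrow> real" where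
  "dYXsfPhi R0 R1 Rs \<sigma> q N y x \<phi> =
     (\<Sum>x'\<in>{x'\<in>inputs N. \<forall>c\<in>sfcells N \<phi>. x' c = x c}.
        (\<Prod>c\<in>grid N - sfcells N \<phi>. bern q (x' c)) * dYXPhi R0 R1 Rs \<sigma> N y x' \<phi>)"

definition noise :: "real \<Rightarrow> nat \<Rightarrow> ((nat \<times> nat) \<Rightarrow> real) measure" where
  "noise \<sigma> N = PiM (grid N) (\<lambda>_. density lborel (normal_density 0 \<sigma>))"

text \<open>Pr(E(X, Phi, Y)) for the joint law of (X, Phi, Z), with Y = R_X(sneak) + Z.\<close>
definition chanprob :: "real \<Rightarrow> real \<Rightarrow> real \<Rightarrow> real \<Rightarrow> real \<Rightarrow> nat \<Rightarrow> (nat \<Rightarrow> real) \<Rightarrow> nat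
    \<Rightarrow> (((nat \<times> nat) \<Rightarrow> bool) \<Rightarrow> (nat \<times> nat) set \<Rightarrow> ((nat \<times> nat) \<Rightarrow> real) \<Rightarrow> bool) \<Rightarrow> real" where
  "chanprob R0 R1 Rs \<sigma> q K p N E =
     (\<Sum>x\<in>inputs N. \<Sum>\<phi>\<in>patterns K N. prX q N x * prPhi p N \<phi> *
        measure (noise \<sigma> N)
          {z \<in> space (noise \<sigma> N). E x \<phi> (\<lambda>c. cellmean R0 R1 Rs \<phi> x c + z c)})"

end

theory Submission
  imports Defs
begin

(* Write r for the ratio inside either logarithm: a coarser density of Y divided by the density of Y
   given (X, Phi).  Two facts make |ln r| / N^2 small with high probability.
   (i) r is never small.  The coarser density is a mixture that contains the finer one with weight at
   least p_min N^(-2K) min(q, 1 - q)^(2KN), the last factor paying for the at most 2KN entries of X_sf.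
   Hence ln r >= - O(N), and for large N the event |ln r| >= eps N^2 / 2 forces r >= exp (eps N^2 / 2).
   (ii) E r = 1.  For P_{Y|X} / P_{Y|X,Phi} this says that P_{Y|X} is a density.  For
   P_Y / P_{Y|X_sf,Phi}, fix Phi and y: summing P(x) P(y|x,Phi) / P(y|x_sf,Phi) over the x with a given
   restriction x_sf gives P(x_sf), so the expectation reduces to the integral of P_Y.
   Markov's inequality now bounds the probability of the complementary event by exp (- eps N^2 / 2). *)

section \<open>Products of Gaussian densities\<close>

lemma distr_PiM_componentwise:
  fixes f :: "'i \<Rightarrow> 'a \<Rightarrow> 'b"
  assumes I: "finite I" and M: "\<And>i. prob_space (M i)" and f: "\<And>i. f i \<in> M i \<rightarrow>\<^sub>M N i"
  shows "distr (PiM I M) (PiM I N) (\<lambda>x. \<lambda>i\<in>I. f i (x i)) = PiM I (\<lambda>i. distr (M i) (N i) (f i))"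
proof (rule product_sigma_finite.PiM_eqI[OF _ I])
  have "prob_space (distr (M i) (N i) (f i))" for i
    using M f by (rule prob_space.prob_space_distr)
  then show "product_sigma_finite (\<lambda>i. distr (M i) (N i) (f i))"
    unfolding product_sigma_finite_def by (auto intro: prob_space_imp_sigma_finite)
  show "sets (distr (PiM I M) (PiM I N) (\<lambda>x. \<lambda>i\<in>I. f i (x i))) = sets (PiM I (\<lambda>i. distr (M i) (N i) (f i)))"
    by (auto intro!: sets_PiM_cong)
  have Mf: "product_sigma_finite M"
    unfolding product_sigma_finite_def using M by (auto intro: prob_space_imp_sigma_finite)
  have "(\<lambda>x. f i (x i)) \<in> PiM I M \<rightarrow>\<^sub>M N i" if "i \<in> I" for i
    using measurable_component_singleton[OF that] f by (rule measurable_compose)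
  then have map: "(\<lambda>x. \<lambda>i\<in>I. f i (x i)) \<in> PiM I M \<rightarrow>\<^sub>M PiM I N"
    by (rule measurable_restrict)
  fix A assume A: "\<And>i. i \<in> I \<Longrightarrow> A i \<in> sets (distr (M i) (N i) (f i))"
  have "emeasure (distr (PiM I M) (PiM I N) (\<lambda>x. \<lambda>i\<in>I. f i (x i))) (PiE I A)
      = emeasure (PiM I M) (PiE I (\<lambda>i. f i -` A i \<inter> space (M i)))"
    using A by (subst emeasure_distr[OF map]) (auto intro!: sets_PiM_I_finite I arg_cong2[where f=emeasure]
        simp: space_PiM PiE_iff)
  also have "\<dots> = (\<Prod>i\<in>I. emeasure (M i) (f i -` A i \<inter> space (M i)))"
    using A f by (intro product_sigma_finite.emeasure_PiM[OF Mf I]) auto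
  also have "\<dots> = (\<Prod>i\<in>I. emeasure (distr (M i) (N i) (f i)) (A i))"
    using A f by (intro prod.cong refl emeasure_distr[symmetric]) auto
  finally show "emeasure (distr (PiM I M) (PiM I N) (\<lambda>x. \<lambda>i\<in>I. f i (x i))) (PiE I A)
      = (\<Prod>i\<in>I. emeasure (distr (M i) (N i) (f i)) (A i))" .
qed

lemma PiM_density:
  fixes f :: "'i \<Rightarrow> 'a \<Rightarrow> ennreal"
  assumes I: "finite I" and M: "product_sigma_finite M"
    and Mf: "product_sigma_finite (\<lambda>i. density (M i) (f i))"
    and f: "\<And>i. f i \<in> borel_measurable (M i)"
  shows "PiM I (\<lambda>i. density (M i) (f i)) = density (PiM I M) (\<lambda>x. \<Prod>i\<in>I. f i (x i))"
proof (rule product_sigma_finite.PiM_eqI[OF Mf I, symmetric])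
  show "sets (density (PiM I M) (\<lambda>x. \<Prod>i\<in>I. f i (x i))) = sets (PiM I (\<lambda>i. density (M i) (f i)))"
    by (auto intro!: sets_PiM_cong)
  have "(\<lambda>x. f i (x i)) \<in> borel_measurable (PiM I M)" if "i \<in> I" for i
    using measurable_component_singleton[OF that] f by (rule measurable_compose)
  then have dens: "(\<lambda>x. \<Prod>i\<in>I. f i (x i)) \<in> borel_measurable (PiM I M)"
    by (rule borel_measurable_prod_ennreal)
  fix A assume A: "\<And>i. i \<in> I \<Longrightarrow> A i \<in> sets (density (M i) (f i))"
  then have "PiE I A \<in> sets (PiM I M)"
    by (intro sets_PiM_I_finite I) auto
  then have "emeasure (density (PiM I M) (\<lambda>x. \<Prod>i\<in>I. f i (x i))) (PiE I A)
      = (\<integral>\<^sup>+x. (\<Prod>i\<in>I. f i (x i)) * indicator (PiE I A) x \<partial>PiM I M)"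
    by (rule emeasure_density[OF dens])
  also have "\<dots> = (\<integral>\<^sup>+x. (\<Prod>i\<in>I. f i (x i) * indicator (A i) (x i)) \<partial>PiM I M)"
    by (intro nn_integral_cong) (auto simp: prod.distrib indicator_def space_PiM PiE_iff I)
  also have "\<dots> = (\<Prod>i\<in>I. \<integral>\<^sup>+t. f i t * indicator (A i) t \<partial>M i)"
    using A f by (intro product_sigma_finite.product_nn_integral_prod[OF M I]) auto
  also have "\<dots> = (\<Prod>i\<in>I. emeasure (density (M i) (f i)) (A i))"
    using A f by (intro prod.cong refl emeasure_density[symmetric]) auto
  finally show "emeasure (density (PiM I M) (\<lambda>x. \<Prod>i\<in>I. f i (x i))) (PiE I A)
      = (\<Prod>i\<in>I. emeasure (density (M i) (f i)) (A i))" .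
qed

lemma distr_normal_density_shift:
  assumes "0 < \<sigma>"
  shows "distr (density lborel (normal_density 0 \<sigma>)) lborel ((+) a) = density lborel (normal_density a \<sigma>)"
proof -
  interpret prob_space "density lborel (normal_density 0 \<sigma>)"
    using assms by (rule prob_space_normal_density)
  have "distributed (density lborel (normal_density 0 \<sigma>)) lborel (\<lambda>x. x) (normal_density 0 \<sigma>)"
    by (simp add: distributed_def distr_id2)
  from normal_density_affine[OF this assms, of 1 a] show ?thesis
    by (simp add: distributed_def)
qed

lemma nn_integral_PiM_normal_shift:
  fixes g :: "('i \<Rightarrow> real) \<Rightarrow> ennreal"
  assumes I: "finite I" and \<sigma>: "0 < \<sigma>" and g: "g \<in> borel_measurable (PiM I (\<lambda>_. lborel))"
  shows "(\<integral>\<^sup>+z. g (\<lambda>i\<in>I. m i + z i) \<partial>PiM I (\<lambda>_. density lborel (normal_density 0 \<sigma>)))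
       = (\<integral>\<^sup>+y. ennreal (\<Prod>i\<in>I. normal_density (m i) \<sigma> (y i)) * g y \<partial>PiM I (\<lambda>_. lborel))"
proof -
  have shift: "distr (PiM I (\<lambda>_. density lborel (normal_density 0 \<sigma>))) (PiM I (\<lambda>_. lborel)) (\<lambda>z. \<lambda>i\<in>I. m i + z i)
      = PiM I (\<lambda>i. density lborel (normal_density (m i) \<sigma>))"
    using distr_PiM_componentwise[OF I, of "\<lambda>_. density lborel (normal_density 0 \<sigma>)" "\<lambda>i. (+) (m i)" "\<lambda>_. lborel"]
    by (simp add: prob_space_normal_density[OF \<sigma>] distr_normal_density_shift[OF \<sigma>])
  have "product_sigma_finite (\<lambda>i. density lborel (normal_density (m i) \<sigma>))"
    unfolding product_sigma_finite_def
    using prob_space_normal_density[OF \<sigma>] by (auto intro: prob_space_imp_sigma_finite)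
  then have dens: "PiM I (\<lambda>i. density lborel (normal_density (m i) \<sigma>))
      = density (PiM I (\<lambda>_. lborel)) (\<lambda>y. ennreal (\<Prod>i\<in>I. normal_density (m i) \<sigma> (y i)))"
    by (subst PiM_density[OF I]) (auto simp: product_sigma_finite_def prod_ennreal sigma_finite_lborel)
  have "(\<integral>\<^sup>+z. g (\<lambda>i\<in>I. m i + z i) \<partial>PiM I (\<lambda>_. density lborel (normal_density 0 \<sigma>)))
      = (\<integral>\<^sup>+y. g y \<partial>PiM I (\<lambda>i. density lborel (normal_density (m i) \<sigma>)))"
    unfolding shift[symmetric] using g
    by (intro nn_integral_distr[symmetric] measurable_restrict) auto
  also have "\<dots> = (\<integral>\<^sup>+y. ennreal (\<Prod>i\<in>I. normal_density (m i) \<sigma> (y i)) * g y \<partial>PiM I (\<lambda>_. lborel))"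
    unfolding dens using g by (intro nn_integral_density) auto
  finally show ?thesis .
qed

lemma nn_integral_sum_real:
  fixes g :: "'b \<Rightarrow> 'a \<Rightarrow> real"
  assumes A: "finite A" and w: "\<And>a. a \<in> A \<Longrightarrow> 0 \<le> w a"
    and g: "\<And>a. a \<in> A \<Longrightarrow> g a \<in> borel_measurable M" and g_nonneg: "\<And>a y. a \<in> A \<Longrightarrow> 0 \<le> g a y"
  shows "(\<integral>\<^sup>+y. ennreal (\<Sum>a\<in>A. w a * g a y) \<partial>M) = (\<Sum>a\<in>A. ennreal (w a) * (\<integral>\<^sup>+y. ennreal (g a y) \<partial>M))"
proof -
  have "(\<integral>\<^sup>+y. ennreal (\<Sum>a\<in>A. w a * g a y) \<partial>M) = (\<integral>\<^sup>+y. (\<Sum>a\<in>A. ennreal (w a) * ennreal (g a y)) \<partial>M)"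
  proof (intro nn_integral_cong)
    fix y
    have "ennreal (\<Sum>a\<in>A. w a * g a y) = (\<Sum>a\<in>A. ennreal (w a * g a y))"
      by (rule sum_ennreal[symmetric]) (simp add: w g_nonneg)
    then show "ennreal (\<Sum>a\<in>A. w a * g a y) = (\<Sum>a\<in>A. ennreal (w a) * ennreal (g a y))"
      by (simp add: w g_nonneg ennreal_mult)
  qed
  also have "\<dots> = (\<Sum>a\<in>A. \<integral>\<^sup>+y. ennreal (w a) * ennreal (g a y) \<partial>M)"
    using g by (intro nn_integral_sum) auto
  also have "\<dots> = (\<Sum>a\<in>A. ennreal (w a) * (\<integral>\<^sup>+y. ennreal (g a y) \<partial>M))"
    using g by (intro sum.cong refl nn_integral_cmult) auto
  finally show ?thesis .
qed

lemma sum_PiE_prod_bern: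
  assumes "finite T"
  shows "(\<Sum>f\<in>PiE T (\<lambda>_. UNIV). \<Prod>c\<in>T. bern q (f c)) = 1"
proof -
  have "(\<Sum>f\<in>PiE T (\<lambda>_. UNIV). \<Prod>c\<in>T. bern q (f c)) = (\<Prod>c\<in>T. \<Sum>b\<in>UNIV. bern q b)"
    using assms by (intro prod_sum_PiE[symmetric]) auto
  also have "\<dots> = 1" by (simp add: UNIV_bool bern_def)
  finally show ?thesis .
qed

lemma sum_fibre_prod_bern:
  assumes G: "finite G" and S: "S \<subseteq> G" and x: "x \<in> PiE G (\<lambda>_. UNIV)"
  shows "(\<Sum>x'\<in>{x'\<in>PiE G (\<lambda>_. UNIV). \<forall>c\<in>S. x' c = x c}. \<Prod>c\<in>G - S. bern q (x' c)) = 1"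
proof -
  have "(\<Sum>x'\<in>{x'\<in>PiE G (\<lambda>_. UNIV). \<forall>c\<in>S. x' c = x c}. \<Prod>c\<in>G - S. bern q (x' c))
      = (\<Sum>f\<in>PiE (G - S) (\<lambda>_. UNIV). \<Prod>c\<in>G - S. bern q (f c))"
  proof (rule sum.reindex_bij_witness[where j="\<lambda>x'. restrict x' (G - S)"
        and i="\<lambda>f c. if c \<in> G - S then f c else x c"])
    fix x' assume "x' \<in> {x'\<in>PiE G (\<lambda>_. UNIV). \<forall>c\<in>S. x' c = x c}"
    with x show "(\<lambda>c. if c \<in> G - S then restrict x' (G - S) c else x c) = x'"
      by (auto simp: PiE_def extensional_def)
  next
    fix f :: "_ \<Rightarrow> bool" assume f: "f \<in> PiE (G - S) (\<lambda>_. UNIV)"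
    then show "restrict (\<lambda>c. if c \<in> G - S then f c else x c) (G - S) = f"
      by (auto simp: PiE_def extensional_def restrict_def)
    from f x S show "(\<lambda>c. if c \<in> G - S then f c else x c) \<in> {x'\<in>PiE G (\<lambda>_. UNIV). \<forall>c\<in>S. x' c = x c}"
      by (auto simp: PiE_def extensional_def)
  qed auto
  also have "\<dots> = 1"
    using G by (intro sum_PiE_prod_bern) auto
  finally show ?thesis .
qed

lemma sum_class_normalised:
  fixes A B h S :: "'a \<Rightarrow> real"
  assumes I: "finite I" and R_sym: "\<And>x y. R x y \<Longrightarrow> R y x"
    and R_trans: "\<And>x y z. R x y \<Longrightarrow> R y z \<Longrightarrow> R x z"
    and A: "\<And>x x'. x \<in> I \<Longrightarrow> x' \<in> I \<Longrightarrow> R x x' \<Longrightarrow> A x = A x'"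
    and S: "\<And>x. x \<in> I \<Longrightarrow> S x = (\<Sum>x'\<in>{x'\<in>I. R x x'}. B x' * h x')"
    and S_nonzero: "\<And>x. x \<in> I \<Longrightarrow> S x \<noteq> 0"
    and B: "\<And>x. x \<in> I \<Longrightarrow> (\<Sum>x'\<in>{x'\<in>I. R x x'}. B x') = 1"
  shows "(\<Sum>x\<in>I. A x * B x * h x / S x) = (\<Sum>x\<in>I. A x * B x)"
proof -
  have S_class: "S x = S x'" if "x \<in> I" "x' \<in> I" "R x x'" for x x'
  proof -
    have "{z\<in>I. R x z} = {z\<in>I. R x' z}"
      using that R_sym R_trans by blast
    then show ?thesis using that S by simp
  qed
  have "(\<Sum>x\<in>I. A x * B x) = (\<Sum>x\<in>I. \<Sum>x'\<in>{x'\<in>I. R x x'}. A x * B x * (B x' * h x') / S x)"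
  proof (intro sum.cong refl)
    fix x assume "x \<in> I"
    then have "(\<Sum>x'\<in>{x'\<in>I. R x x'}. A x * B x * (B x' * h x') / S x) = A x * B x * S x / S x"
      by (simp add: S sum_distrib_left sum_divide_distrib)
    with \<open>x \<in> I\<close> S_nonzero show "A x * B x = (\<Sum>x'\<in>{x'\<in>I. R x x'}. A x * B x * (B x' * h x') / S x)"
      by simp
  qed
  also have "\<dots> = (\<Sum>x'\<in>I. \<Sum>x\<in>{x\<in>I. R x x'}. A x * B x * (B x' * h x') / S x)"
    by (rule sum.swap_restrict[OF I I])
  also have "\<dots> = (\<Sum>x'\<in>I. A x' * B x' * h x' / S x' * (\<Sum>x\<in>{x\<in>I. R x' x}. B x))"
    unfolding sum_distrib_left
  proof (intro sum.cong refl)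
    show "{x\<in>I. R x x'} = {x\<in>I. R x' x}" for x' using R_sym by blast
    fix x' x assume "x' \<in> I" "x \<in> {x\<in>I. R x' x}"
    then show "A x * B x * (B x' * h x') / S x = A x' * B x' * h x' / S x' * B x"
      using A[of x' x] S_class[of x' x] by simp
  qed
  also have "\<dots> = (\<Sum>x'\<in>I. A x' * B x' * h x' / S x')"
    by (simp add: B)
  finally show ?thesis by simp
qed

lemma eventually_linear_less_quadratic:
  fixes a b e :: real
  assumes e: "0 < e"
  shows "\<forall>\<^sub>F N in sequentially. a + b * real N < e * real N ^ 2"
proof -
  obtain M :: nat where M: "(\<bar>a\<bar> + \<bar>b\<bar>) / e < real M"
    using reals_Archimedean2 by blast
  show ?thesis
  proof (rule eventually_sequentiallyI[of "max 1 M"])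
    fix N assume "max 1 M \<le> N"
    then have N: "1 \<le> real N" "real M \<le> real N"
      by auto
    have "a \<le> \<bar>a\<bar> * real N"
      using N mult_left_mono[of 1 "real N" "\<bar>a\<bar>"] by linarith
    moreover have "b * real N \<le> \<bar>b\<bar> * real N"
      using N by (intro mult_right_mono) auto
    ultimately have "a + b * real N \<le> (\<bar>a\<bar> + \<bar>b\<bar>) * real N"
      by (simp add: distrib_right)
    also have "\<dots> < e * real N * real N"
    proof (rule mult_strict_right_mono)
      have "\<bar>a\<bar> + \<bar>b\<bar> < e * real M"
        using M e by (simp add: pos_divide_less_eq mult.commute)
      also have "\<dots> \<le> e * real N"
        using N e by simp
      finally show "\<bar>a\<bar> + \<bar>b\<bar> < e * real N" .
    qed (use N in simp)
    finally show "a + b * real N < e * real N ^ 2"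
      by (simp add: power2_eq_square mult.assoc)
  qed
qed

lemma LIMSEQ_exp_neg_quadratic:
  fixes e :: real
  assumes "0 < e"
  shows "(\<lambda>N. exp (- (e * real N ^ 2))) \<longlonglongrightarrow> 0"
proof -
  have "filterlim (\<lambda>N. e * real N ^ 2) at_top sequentially"
  proof (subst filterlim_at_top, intro allI)
    fix Z :: real
    show "\<forall>\<^sub>F N in sequentially. Z \<le> e * real N ^ 2"
      using eventually_linear_less_quadratic[OF assms, of Z 0] by (auto elim: eventually_mono)
  qed
  then have "filterlim (\<lambda>N. - (e * real N ^ 2)) at_bot sequentially"
    by (simp add: filterlim_uminus_at_top)
  with exp_at_bot show ?thesis
    by (rule filterlim_compose)
qed

lemma eventually_exp_neg_quadratic_less:
  fixes a b e :: real and K :: nat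
  assumes e: "0 < e" and a: "0 < a" and b: "0 < b"
  shows "\<forall>\<^sub>F N in sequentially. exp (- (e * real (N^2))) < a * b ^ (2 * K * N) / real (N^2) ^ K"
  using eventually_linear_less_quadratic[OF e, of "- ln a" "2 * real K * (\<bar>ln b\<bar> + 1)"]
    eventually_ge_at_top[of 1]
proof eventually_elim
  case (elim N)
  then have N: "1 \<le> real N"
    by simp
  have "ln (a * b ^ (2 * K * N) / real (N^2) ^ K) = ln a + 2 * real K * (real N * ln b) - 2 * real K * ln (real N)"
    using a b N by (simp add: ln_mult ln_div ln_realpow)
  moreover have "2 * real K * (real N * (- \<bar>ln b\<bar>)) \<le> 2 * real K * (real N * ln b)"
    by (intro mult_left_mono) auto
  moreover have "2 * real K * ln (real N) \<le> 2 * real K * real N"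
    using ln_le_minus_one[of "real N"] N by (intro mult_left_mono) auto
  ultimately have "- (e * real (N^2)) < ln (a * b ^ (2 * K * N) / real (N^2) ^ K)"
    using elim(1) by (simp add: algebra_simps)
  moreover have "0 < a * b ^ (2 * K * N) / real (N^2) ^ K"
    using a b N by simp
  ultimately show ?case
    by (metis exp_less_cancel_iff exp_ln)
qed

lemma ennreal_mult_divide_cancel: "0 < a \<Longrightarrow> ennreal a * ennreal (b / a) = ennreal b"
  by (simp add: ennreal_mult'[symmetric])

lemma exp_le_if_abs_ln_ge:
  fixes r t :: real
  assumes lower: "exp (- t) < r" and abs_ln: "t \<le> \<bar>ln r\<bar>"
  shows "exp t \<le> r"
proof -
  have r: "0 < r"
    using lower exp_gt_zero[of "- t"] by linarith
  with lower have "- t < ln r"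
    by (subst exp_less_cancel_iff[symmetric]) simp
  with abs_ln have "t \<le> ln r"
    by (cases "0 \<le> ln r") auto
  with r show ?thesis
    by (simp add: ln_ge_iff)
qed

section \<open>The channel\<close>

abbreviation lborel_grid :: "nat \<Rightarrow> ((nat \<times> nat) \<Rightarrow> real) measure" where
  "lborel_grid N \<equiv> PiM (grid N) (\<lambda>_. lborel)"

lemma finite_grid [simp]: "finite (grid N)"
  by (simp add: grid_def)

lemma card_grid: "card (grid N) = N^2"
  by (simp add: grid_def power2_eq_square)

lemma finite_inputs [simp]: "finite (inputs N)"
  by (simp add: inputs_def finite_PiE)

lemma finite_patterns [simp]: "finite (patterns K N)"
  unfolding patterns_def by (rule finite_subset[of _ "Pow (grid N)"]) auto

lemma sfcells_subset_grid: "sfcells N \<phi> \<subseteq> grid N"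
  by (auto simp: sfcells_def)

lemma card_sfcells_le:
  assumes "\<phi> \<in> patterns K N"
  shows "card (sfcells N \<phi>) \<le> 2 * K * N"
proof -
  have \<phi>: "finite \<phi>" "card \<phi> \<le> K"
    using assms by (auto simp: patterns_def intro: finite_subset[OF _ finite_grid])
  have "sfcells N \<phi> \<subseteq> (\<Union>(i, j)\<in>\<phi>. {i} \<times> {1..N} \<union> {1..N} \<times> {j})"
    by (auto simp: sfcells_def grid_def)
  then have "card (sfcells N \<phi>) \<le> card (\<Union>(i, j)\<in>\<phi>. {i} \<times> {1..N} \<union> {1..N} \<times> {j})"
    using \<phi> by (intro card_mono) auto
  also have "\<dots> \<le> (\<Sum>(i, j)\<in>\<phi>. card ({i} \<times> {1..N} \<union> {1..N} \<times> {j}))"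
    using card_UN_le[OF \<phi>(1)] by (simp add: case_prod_unfold)
  also have "\<dots> \<le> (\<Sum>(i, j)\<in>\<phi>. 2 * N)"
    by (intro sum_mono) (auto intro: order.trans[OF card_Un_le] simp: case_prod_unfold)
  also have "\<dots> \<le> 2 * K * N"
    using \<phi>(2) by simp
  finally show ?thesis .
qed

lemma sum_prX: "(\<Sum>x\<in>inputs N. prX q N x) = 1"
  unfolding inputs_def prX_def by (rule sum_PiE_prod_bern) simp

lemma prX_split:
  "prX q N x = (\<Prod>c\<in>sfcells N \<phi>. bern q (x c)) * (\<Prod>c\<in>grid N - sfcells N \<phi>. bern q (x c))"
  unfolding prX_def using prod.subset_diff[OF sfcells_subset_grid finite_grid] by (simp add: mult.commute)

lemma dYXPhi_cong:
  "(\<And>c. c \<in> grid N \<Longrightarrow> y c = y' c) \<Longrightarrow> dYXPhi R0 R1 Rs \<sigma> N y x \<phi> = dYXPhi R0 R1 Rs \<sigma> N y' x \<phi>"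
  unfolding dYXPhi_def by (intro prod.cong) auto

lemma dYX_cong:
  "(\<And>c. c \<in> grid N \<Longrightarrow> y c = y' c) \<Longrightarrow> dYX R0 R1 Rs \<sigma> K p N y x = dYX R0 R1 Rs \<sigma> K p N y' x"
  unfolding dYX_def by (intro sum.cong refl arg_cong2[where f="(*)"] dYXPhi_cong) auto

lemma dY_cong:
  "(\<And>c. c \<in> grid N \<Longrightarrow> y c = y' c) \<Longrightarrow> dY R0 R1 Rs \<sigma> q K p N y = dY R0 R1 Rs \<sigma> q K p N y'"
  unfolding dY_def by (intro sum.cong refl arg_cong2[where f="(*)"] dYX_cong) auto

lemma dYXsfPhi_cong:
  "(\<And>c. c \<in> grid N \<Longrightarrow> y c = y' c) \<Longrightarrow> dYXsfPhi R0 R1 Rs \<sigma> q N y x \<phi> = dYXsfPhi R0 R1 Rs \<sigma> q N y' x \<phi>"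
  unfolding dYXsfPhi_def by (intro sum.cong refl arg_cong2[where f="(*)"] dYXPhi_cong) auto

lemma borel_measurable_dYXPhi: "(\<lambda>y. dYXPhi R0 R1 Rs \<sigma> N y x \<phi>) \<in> borel_measurable (lborel_grid N)"
  unfolding dYXPhi_def by measurable

lemma borel_measurable_dYX: "(\<lambda>y. dYX R0 R1 Rs \<sigma> K p N y x) \<in> borel_measurable (lborel_grid N)"
  unfolding dYX_def by (intro borel_measurable_sum borel_measurable_times measurable_const borel_measurable_dYXPhi) simp_all

lemma borel_measurable_dY: "(\<lambda>y. dY R0 R1 Rs \<sigma> q K p N y) \<in> borel_measurable (lborel_grid N)"
  unfolding dY_def by (intro borel_measurable_sum borel_measurable_times measurable_const borel_measurable_dYX) simp_all

lemma borel_measurable_dYXsfPhi: "(\<lambda>y. dYXsfPhi R0 R1 Rs \<sigma> q N y x \<phi>) \<in> borel_measurable (lborel_grid N)"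
  unfolding dYXsfPhi_def by (intro borel_measurable_sum borel_measurable_times measurable_const borel_measurable_dYXPhi) simp_all


lemma measurable_noise_shift: "(\<lambda>z. \<lambda>c\<in>grid N. m c + z c) \<in> noise \<sigma> N \<rightarrow>\<^sub>M lborel_grid N"
  unfolding noise_def by (intro measurable_restrict) auto

type_synonym channel_statistic = "((nat \<times> nat) \<Rightarrow> bool) \<Rightarrow> (nat \<times> nat) set \<Rightarrow> ((nat \<times> nat) \<Rightarrow> real) \<Rightarrow> real"

(* The resistances enter only through the cell means; no property of them is needed. *)
locale reram_channel =
  fixes R0 R1 Rs \<sigma> q :: real and K :: nat and p :: "nat \<Rightarrow> real"
  assumes \<sigma>_pos: "0 < \<sigma>" and q_pos: "0 < q" and q_less_1: "q < 1"
    and p_nonneg: "\<forall>k\<le>K. 0 \<le> p k" and p_sum: "(\<Sum>k\<le>K. p k) = 1"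
begin

(* The expectation of r(X, Phi, Y) under the joint law of the channel, Y having density dYXPhi
   given (X, Phi). *)
definition chanexp :: "nat \<Rightarrow> channel_statistic \<Rightarrow> ennreal" where
  "chanexp N r = (\<Sum>x\<in>inputs N. \<Sum>\<phi>\<in>patterns K N. ennreal (prX q N x * prPhi p N \<phi>) *
     (\<integral>\<^sup>+y. ennreal (dYXPhi R0 R1 Rs \<sigma> N y x \<phi>) * ennreal (r x \<phi> y) \<partial>lborel_grid N))"

lemma bern_pos: "0 < bern q b"
  using q_pos q_less_1 by (simp add: bern_def)

lemma prX_pos: "0 < prX q N x"
  unfolding prX_def by (intro prod_pos) (simp add: bern_pos)

lemma prPhi_nonneg: "\<phi> \<in> patterns K N \<Longrightarrow> 0 \<le> prPhi p N \<phi>"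
  using p_nonneg by (auto simp: prPhi_def patterns_def)

lemma prX_mult_prPhi_nonneg: "\<phi> \<in> patterns K N \<Longrightarrow> 0 \<le> prX q N x * prPhi p N \<phi>"
  using prX_pos prPhi_nonneg by (simp add: less_imp_le)

lemma sum_prPhi:
  assumes "K \<le> N^2"
  shows "(\<Sum>\<phi>\<in>patterns K N. prPhi p N \<phi>) = 1"
proof -
  have patterns: "patterns K N = (\<Union>k\<le>K. {\<phi>. \<phi> \<subseteq> grid N \<and> card \<phi> = k})"
    by (auto simp: patterns_def)
  have "(\<Sum>\<phi>\<in>patterns K N. prPhi p N \<phi>) = (\<Sum>k\<le>K. \<Sum>\<phi>\<in>{\<phi>. \<phi> \<subseteq> grid N \<and> card \<phi> = k}. prPhi p N \<phi>)"
    unfolding patterns by (rule sum.UNION_disjoint) (auto intro: finite_subset[of _ "Pow (grid N)"])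
  also have "\<dots> = (\<Sum>k\<le>K. real (N^2 choose k) * (p k / real (N^2 choose k)))"
    by (intro sum.cong refl) (simp add: prPhi_def n_subsets card_grid)
  also have "\<dots> = (\<Sum>k\<le>K. p k)"
    using assms by (intro sum.cong refl) simp
  finally show ?thesis
    using p_sum by simp
qed

lemma sum_prX_mult_prPhi: "K \<le> N^2 \<Longrightarrow> (\<Sum>x\<in>inputs N. \<Sum>\<phi>\<in>patterns K N. prX q N x * prPhi p N \<phi>) = 1"
  by (simp add: sum_product[symmetric] sum_prX sum_prPhi)

lemma dYXPhi_pos: "0 < dYXPhi R0 R1 Rs \<sigma> N y x \<phi>"
  unfolding dYXPhi_def by (intro prod_pos) (simp add: normal_density_pos \<sigma>_pos)

lemma dYX_nonneg: "0 \<le> dYX R0 R1 Rs \<sigma> K p N y x"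
  unfolding dYX_def by (intro sum_nonneg mult_nonneg_nonneg prPhi_nonneg less_imp_le[OF dYXPhi_pos])

lemma dY_nonneg: "0 \<le> dY R0 R1 Rs \<sigma> q K p N y"
  unfolding dY_def by (intro sum_nonneg mult_nonneg_nonneg dYX_nonneg less_imp_le[OF prX_pos])

lemma dYX_lower_bound:
  assumes "\<phi> \<in> patterns K N"
  shows "prPhi p N \<phi> * dYXPhi R0 R1 Rs \<sigma> N y x \<phi> \<le> dYX R0 R1 Rs \<sigma> K p N y x"
  unfolding dYX_def using assms
  by (intro member_le_sum[where f="\<lambda>\<phi>. prPhi p N \<phi> * dYXPhi R0 R1 Rs \<sigma> N y x \<phi>"])
     (auto intro!: mult_nonneg_nonneg prPhi_nonneg less_imp_le[OF dYXPhi_pos])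

lemma dYXsfPhi_pos:
  assumes x: "x \<in> inputs N"
  shows "0 < dYXsfPhi R0 R1 Rs \<sigma> q N y x \<phi>"
proof -
  let ?f = "\<lambda>x'. (\<Prod>c\<in>grid N - sfcells N \<phi>. bern q (x' c)) * dYXPhi R0 R1 Rs \<sigma> N y x' \<phi>"
  have "0 < ?f x"
    by (intro mult_pos_pos prod_pos dYXPhi_pos) (simp add: bern_pos)
  also have "?f x \<le> dYXsfPhi R0 R1 Rs \<sigma> q N y x \<phi>"
    unfolding dYXsfPhi_def using x
    by (intro member_le_sum[where f="?f"])
       (auto intro!: mult_nonneg_nonneg prod_nonneg less_imp_le[OF bern_pos] less_imp_le[OF dYXPhi_pos]
         intro: finite_subset[of _ "inputs N"])
  finally show ?thesis .
qed

lemma dY_lower_bound: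
  assumes \<phi>: "\<phi> \<in> patterns K N"
  shows "prPhi p N \<phi> * (\<Prod>c\<in>sfcells N \<phi>. bern q (x c)) * dYXsfPhi R0 R1 Rs \<sigma> q N y x \<phi>
     \<le> dY R0 R1 Rs \<sigma> q K p N y"
proof -
  let ?fibre = "{x'\<in>inputs N. \<forall>c\<in>sfcells N \<phi>. x' c = x c}"
  have "prPhi p N \<phi> * (\<Prod>c\<in>sfcells N \<phi>. bern q (x c)) * dYXsfPhi R0 R1 Rs \<sigma> q N y x \<phi>
      = (\<Sum>x'\<in>?fibre. prX q N x' * (prPhi p N \<phi> * dYXPhi R0 R1 Rs \<sigma> N y x' \<phi>))"
    unfolding dYXsfPhi_def sum_distrib_left
  proof (intro sum.cong refl)
    fix x' assume "x' \<in> ?fibre"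
    then have "(\<Prod>c\<in>sfcells N \<phi>. bern q (x c)) = (\<Prod>c\<in>sfcells N \<phi>. bern q (x' c))"
      by (intro prod.cong) auto
    then show "prPhi p N \<phi> * (\<Prod>c\<in>sfcells N \<phi>. bern q (x c)) *
        ((\<Prod>c\<in>grid N - sfcells N \<phi>. bern q (x' c)) * dYXPhi R0 R1 Rs \<sigma> N y x' \<phi>)
      = prX q N x' * (prPhi p N \<phi> * dYXPhi R0 R1 Rs \<sigma> N y x' \<phi>)"
      by (simp add: prX_split[where \<phi>=\<phi>])
  qed
  also have "\<dots> \<le> (\<Sum>x'\<in>?fibre. prX q N x' * dYX R0 R1 Rs \<sigma> K p N y x')"
    by (intro sum_mono mult_left_mono dYX_lower_bound \<phi> less_imp_le[OF prX_pos])
  also have "\<dots> \<le> (\<Sum>x'\<in>inputs N. prX q N x' * dYX R0 R1 Rs \<sigma> K p N y x')"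
    by (intro sum_mono2) (auto intro!: mult_nonneg_nonneg dYX_nonneg less_imp_le[OF prX_pos])
  finally show ?thesis
    by (simp add: dY_def)
qed

lemma prob_space_noise: "prob_space (noise \<sigma> N)"
  unfolding noise_def by (intro prob_space_PiM prob_space_normal_density \<sigma>_pos)

lemma nn_integral_noise_cellmean:
  assumes "g \<in> borel_measurable (lborel_grid N)"
  shows "(\<integral>\<^sup>+z. g (\<lambda>c\<in>grid N. cellmean R0 R1 Rs \<phi> x c + z c) \<partial>noise \<sigma> N)
       = (\<integral>\<^sup>+y. ennreal (dYXPhi R0 R1 Rs \<sigma> N y x \<phi>) * g y \<partial>lborel_grid N)"
  unfolding noise_def dYXPhi_def using finite_grid \<sigma>_pos assms by (rule nn_integral_PiM_normal_shift)

lemma nn_integral_dYXPhi: "(\<integral>\<^sup>+y. ennreal (dYXPhi R0 R1 Rs \<sigma> N y x \<phi>) \<partial>lborel_grid N) = 1"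
proof -
  interpret prob_space "noise \<sigma> N"
    by (rule prob_space_noise)
  show ?thesis
    using nn_integral_noise_cellmean[of "\<lambda>_. 1" N \<phi> x] by (simp add: emeasure_space_1)
qed

lemma nn_integral_dYX:
  assumes "K \<le> N^2"
  shows "(\<integral>\<^sup>+y. ennreal (dYX R0 R1 Rs \<sigma> K p N y x) \<partial>lborel_grid N) = 1"
  unfolding dYX_def
  by (subst nn_integral_sum_real)
     (auto simp: nn_integral_dYXPhi prPhi_nonneg sum_prPhi[OF assms] borel_measurable_dYXPhi
       less_imp_le[OF dYXPhi_pos])

lemma nn_integral_dY:
  assumes "K \<le> N^2"
  shows "(\<integral>\<^sup>+y. ennreal (dY R0 R1 Rs \<sigma> q K p N y) \<partial>lborel_grid N) = 1"
  unfolding dY_def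
  by (subst nn_integral_sum_real)
     (auto simp: nn_integral_dYX[OF assms] less_imp_le[OF prX_pos] sum_prX borel_measurable_dYX dYX_nonneg)


lemma sum_prX_mult_dYXPhi_div_dYXsfPhi:
  "(\<Sum>x\<in>inputs N. prX q N x * dYXPhi R0 R1 Rs \<sigma> N y x \<phi> / dYXsfPhi R0 R1 Rs \<sigma> q N y x \<phi>) = 1"
proof -
  let ?A = "\<lambda>x. \<Prod>c\<in>sfcells N \<phi>. bern q (x c)"
  let ?B = "\<lambda>x. \<Prod>c\<in>grid N - sfcells N \<phi>. bern q (x c)"
  have "(\<Sum>x\<in>inputs N. ?A x * ?B x * dYXPhi R0 R1 Rs \<sigma> N y x \<phi> / dYXsfPhi R0 R1 Rs \<sigma> q N y x \<phi>)
      = (\<Sum>x\<in>inputs N. ?A x * ?B x)"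
  proof (rule sum_class_normalised[where R="\<lambda>x x'. \<forall>c\<in>sfcells N \<phi>. x' c = x c"])
    show "?A x = ?A x'" if "\<forall>c\<in>sfcells N \<phi>. x' c = x c" for x x'
      using that by (intro prod.cong) auto
    show "dYXsfPhi R0 R1 Rs \<sigma> q N y x \<phi> \<noteq> 0" if "x \<in> inputs N" for x
      using dYXsfPhi_pos[OF that, of y \<phi>] by linarith
    show "(\<Sum>x'\<in>{x'\<in>inputs N. \<forall>c\<in>sfcells N \<phi>. x' c = x c}. ?B x') = 1" if "x \<in> inputs N" for x
      using sum_fibre_prod_bern[OF finite_grid sfcells_subset_grid] that by (simp add: inputs_def)
  qed (auto simp: dYXsfPhi_def)
  then show ?thesis
    by (simp add: prX_split[symmetric] sum_prX)
qed

lemma chanexp_dYX_div_dYXPhi: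
  assumes "K \<le> N^2"
  shows "chanexp N (\<lambda>x \<phi> y. dYX R0 R1 Rs \<sigma> K p N y x / dYXPhi R0 R1 Rs \<sigma> N y x \<phi>) = 1"
proof -
  have "chanexp N (\<lambda>x \<phi> y. dYX R0 R1 Rs \<sigma> K p N y x / dYXPhi R0 R1 Rs \<sigma> N y x \<phi>)
      = (\<Sum>x\<in>inputs N. \<Sum>\<phi>\<in>patterns K N. ennreal (prX q N x * prPhi p N \<phi>))"
    unfolding chanexp_def
    by (simp add: ennreal_mult_divide_cancel dYXPhi_pos nn_integral_dYX[OF assms])
  also have "\<dots> = 1"
    by (simp add: prX_mult_prPhi_nonneg sum_nonneg sum_prX_mult_prPhi[OF assms])
  finally show ?thesis .
qed

lemma chanexp_dY_div_dYXsfPhi: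
  assumes "K \<le> N^2"
  shows "chanexp N (\<lambda>x \<phi> y. dY R0 R1 Rs \<sigma> q K p N y / dYXsfPhi R0 R1 Rs \<sigma> q N y x \<phi>) = 1"
proof -
  let ?g = "\<lambda>\<phi> x y. dYXPhi R0 R1 Rs \<sigma> N y x \<phi> * dY R0 R1 Rs \<sigma> q K p N y / dYXsfPhi R0 R1 Rs \<sigma> q N y x \<phi>"
  have g_nonneg: "0 \<le> ?g \<phi> x y" if "x \<in> inputs N" for \<phi> x y
    using dYXPhi_pos dYXsfPhi_pos[OF that] dY_nonneg by (intro mult_nonneg_nonneg divide_nonneg_pos) (auto intro: less_imp_le)
  have g_meas: "?g \<phi> x \<in> borel_measurable (lborel_grid N)" for \<phi> x
    by (intro borel_measurable_divide borel_measurable_times borel_measurable_dYXPhi borel_measurable_dY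
        borel_measurable_dYXsfPhi)
  have "chanexp N (\<lambda>x \<phi> y. dY R0 R1 Rs \<sigma> q K p N y / dYXsfPhi R0 R1 Rs \<sigma> q N y x \<phi>)
      = (\<Sum>\<phi>\<in>patterns K N. \<Sum>x\<in>inputs N. ennreal (prPhi p N \<phi> * prX q N x) * (\<integral>\<^sup>+y. ennreal (?g \<phi> x y) \<partial>lborel_grid N))"
    unfolding chanexp_def
    by (subst sum.swap) (simp add: ennreal_mult'[symmetric] less_imp_le[OF dYXPhi_pos] mult.commute)
  also have "\<dots> = (\<Sum>\<phi>\<in>patterns K N. \<integral>\<^sup>+y. ennreal (\<Sum>x\<in>inputs N. (prPhi p N \<phi> * prX q N x) * ?g \<phi> x y) \<partial>lborel_grid N)"
    by (intro sum.cong refl nn_integral_sum_real[symmetric] g_meas g_nonneg)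
       (auto intro: mult_nonneg_nonneg prPhi_nonneg less_imp_le[OF prX_pos])
  also have "\<dots> = (\<Sum>\<phi>\<in>patterns K N. \<integral>\<^sup>+y. ennreal (prPhi p N \<phi>) * ennreal (dY R0 R1 Rs \<sigma> q K p N y) \<partial>lborel_grid N)"
  proof (intro sum.cong refl nn_integral_cong)
    fix \<phi> y assume "\<phi> \<in> patterns K N"
    have "(\<Sum>x\<in>inputs N. (prPhi p N \<phi> * prX q N x) * ?g \<phi> x y)
        = prPhi p N \<phi> * dY R0 R1 Rs \<sigma> q K p N y *
          (\<Sum>x\<in>inputs N. prX q N x * dYXPhi R0 R1 Rs \<sigma> N y x \<phi> / dYXsfPhi R0 R1 Rs \<sigma> q N y x \<phi>)"
      by (simp add: sum_distrib_left algebra_simps)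
    with \<open>\<phi> \<in> patterns K N\<close> show "ennreal (\<Sum>x\<in>inputs N. (prPhi p N \<phi> * prX q N x) * ?g \<phi> x y)
        = ennreal (prPhi p N \<phi>) * ennreal (dY R0 R1 Rs \<sigma> q K p N y)"
      by (simp add: sum_prX_mult_dYXPhi_div_dYXsfPhi ennreal_mult prPhi_nonneg dY_nonneg)
  qed
  also have "\<dots> = (\<Sum>\<phi>\<in>patterns K N. ennreal (prPhi p N \<phi>))"
    using borel_measurable_dY by (simp add: nn_integral_cmult nn_integral_dY[OF assms])
  also have "\<dots> = 1"
    by (simp add: prPhi_nonneg sum_prPhi[OF assms])
  finally show ?thesis .
qed

definition pmin :: real where
  "pmin = Min {p k | k. k \<le> K \<and> 0 < p k}"

lemma pmin_pos: "0 < pmin" and pmin_le: "k \<le> K \<Longrightarrow> 0 < p k \<Longrightarrow> pmin \<le> p k"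
proof -
  have fin: "finite {p k | k. k \<le> K \<and> 0 < p k}"
    by simp
  have "{p k | k. k \<le> K \<and> 0 < p k} \<noteq> {}"
  proof
    assume "{p k | k. k \<le> K \<and> 0 < p k} = {}"
    with p_nonneg have "\<forall>k\<in>{..K}. p k = 0"
      by force
    with p_sum show False
      by simp
  qed
  with fin have "pmin \<in> {p k | k. k \<le> K \<and> 0 < p k}"
    unfolding pmin_def by (rule Min_in)
  then show "0 < pmin"
    by auto
  show "k \<le> K \<Longrightarrow> 0 < p k \<Longrightarrow> pmin \<le> p k"
    unfolding pmin_def using fin by (intro Min_le) auto
qed

lemma prPhi_ge:
  assumes N: "1 \<le> N" and \<phi>: "\<phi> \<in> patterns K N" and pos: "0 < prPhi p N \<phi>"
  shows "pmin / real (N^2) ^ K \<le> prPhi p N \<phi>"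
proof -
  let ?k = "card \<phi>"
  have kK: "?k \<le> K"
    using \<phi> by (simp add: patterns_def)
  have "?k \<le> card (grid N)"
    using \<phi> by (auto simp: patterns_def intro: card_mono)
  then have kN: "?k \<le> N^2"
    by (simp add: card_grid)
  then have binom_pos: "0 < real (N^2 choose ?k)"
    by simp
  then have pk: "0 < p ?k"
    using pos by (simp add: prPhi_def zero_less_divide_iff)
  have "real (N^2 choose ?k) \<le> real (N^2) ^ ?k"
    using binomial_le_pow[OF kN] by (metis of_nat_le_iff of_nat_power)
  also have "\<dots> \<le> real (N^2) ^ K"
    using N kK by (intro power_increasing) auto
  finally have "p ?k / real (N^2) ^ K \<le> p ?k / real (N^2 choose ?k)"
    using pk binom_pos N by (intro divide_left_mono mult_pos_pos) auto
  moreover have "pmin / real (N^2) ^ K \<le> p ?k / real (N^2) ^ K"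
    using pmin_le[OF kK pk] by (simp add: divide_right_mono)
  ultimately show ?thesis
    by (simp add: prPhi_def)
qed

lemma prod_bern_sfcells_ge:
  assumes "\<phi> \<in> patterns K N"
  shows "min q (1 - q) ^ (2 * K * N) \<le> (\<Prod>c\<in>sfcells N \<phi>. bern q (x c))"
proof -
  have "min q (1 - q) ^ (2 * K * N) \<le> min q (1 - q) ^ card (sfcells N \<phi>)"
    using q_pos q_less_1 card_sfcells_le[OF assms] by (intro power_decreasing) auto
  also have "\<dots> \<le> (\<Prod>c\<in>sfcells N \<phi>. bern q (x c))"
    using q_pos q_less_1 prod_mono[of "sfcells N \<phi>" "\<lambda>_. min q (1 - q)" "\<lambda>c. bern q (x c)"]
    by (simp add: bern_def)
  finally show ?thesis .
qed

definition ratio_lb :: "nat \<Rightarrow> real" where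
  "ratio_lb N = pmin * min q (1 - q) ^ (2 * K * N) / real (N^2) ^ K"

lemma dY_div_dYXsfPhi_ge:
  assumes N: "1 \<le> N" and x: "x \<in> inputs N" and \<phi>: "\<phi> \<in> patterns K N" and pos: "0 < prPhi p N \<phi>"
  shows "ratio_lb N \<le> dY R0 R1 Rs \<sigma> q K p N y / dYXsfPhi R0 R1 Rs \<sigma> q N y x \<phi>"
proof -
  have "ratio_lb N = pmin / real (N^2) ^ K * min q (1 - q) ^ (2 * K * N)"
    by (simp add: ratio_lb_def)
  also have "\<dots> \<le> prPhi p N \<phi> * (\<Prod>c\<in>sfcells N \<phi>. bern q (x c))"
    using pmin_pos q_pos q_less_1 pos
    by (intro mult_mono prPhi_ge[OF N \<phi> pos] prod_bern_sfcells_ge[OF \<phi>]) auto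
  also have "\<dots> \<le> dY R0 R1 Rs \<sigma> q K p N y / dYXsfPhi R0 R1 Rs \<sigma> q N y x \<phi>"
    using dY_lower_bound[OF \<phi>] dYXsfPhi_pos[OF x] by (simp add: le_divide_eq)
  finally show ?thesis .
qed

lemma dYX_div_dYXPhi_ge:
  assumes N: "1 \<le> N" and \<phi>: "\<phi> \<in> patterns K N" and pos: "0 < prPhi p N \<phi>"
  shows "ratio_lb N \<le> dYX R0 R1 Rs \<sigma> K p N y x / dYXPhi R0 R1 Rs \<sigma> N y x \<phi>"
proof -
  have "ratio_lb N \<le> pmin / real (N^2) ^ K * 1"
    unfolding ratio_lb_def using pmin_pos q_pos q_less_1
    by (subst times_divide_eq_left[symmetric], intro mult_left_mono power_le_one) auto
  also have "\<dots> \<le> prPhi p N \<phi>"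
    using prPhi_ge[OF N \<phi> pos] by simp
  also have "\<dots> \<le> dYX R0 R1 Rs \<sigma> K p N y x / dYXPhi R0 R1 Rs \<sigma> N y x \<phi>"
    using dYX_lower_bound[OF \<phi>] dYXPhi_pos by (simp add: le_divide_eq)
  finally show ?thesis .
qed

section \<open>Deviation of the log-likelihood ratios\<close>

lemma emeasure_noise_ratio_ge:
  assumes r: "r \<in> borel_measurable (lborel_grid N)"
  shows "emeasure (noise \<sigma> N) {z \<in> space (noise \<sigma> N). exp t \<le> r (\<lambda>c\<in>grid N. cellmean R0 R1 Rs \<phi> x c + z c)}
    \<le> ennreal (exp (- t)) * (\<integral>\<^sup>+y. ennreal (dYXPhi R0 R1 Rs \<sigma> N y x \<phi>) * ennreal (r y) \<partial>lborel_grid N)"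
proof -
  let ?Q = "noise \<sigma> N"
  let ?u = "\<lambda>z. ennreal (r (\<lambda>c\<in>grid N. cellmean R0 R1 Rs \<phi> x c + z c))"
  have r_shift: "(\<lambda>z. r (\<lambda>c\<in>grid N. cellmean R0 R1 Rs \<phi> x c + z c)) \<in> borel_measurable ?Q"
    using measurable_noise_shift r by (rule measurable_compose)
  then have u: "?u \<in> borel_measurable ?Q"
    by simp
  have "{z \<in> space ?Q. exp t \<le> r (\<lambda>c\<in>grid N. cellmean R0 R1 Rs \<phi> x c + z c)}
      \<subseteq> {z \<in> space ?Q. 1 \<le> ennreal (exp (- t)) * ?u z}"
    by (auto simp: ennreal_mult'[symmetric] exp_minus field_simps intro!: ennreal_leI)
  then have "emeasure ?Q {z \<in> space ?Q. exp t \<le> r (\<lambda>c\<in>grid N. cellmean R0 R1 Rs \<phi> x c + z c)}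
      \<le> emeasure ?Q {z \<in> space ?Q. 1 \<le> ennreal (exp (- t)) * ?u z}"
    using r_shift by (intro emeasure_mono) measurable
  also have "\<dots> \<le> ennreal (exp (- t)) * (\<integral>\<^sup>+z. ?u z * indicator (space ?Q) z \<partial>?Q)"
    using u by (intro nn_integral_Markov_inequality) auto
  also have "(\<integral>\<^sup>+z. ?u z * indicator (space ?Q) z \<partial>?Q) = (\<integral>\<^sup>+z. ?u z \<partial>?Q)"
    by (intro nn_integral_cong) simp
  also have "\<dots> = (\<integral>\<^sup>+y. ennreal (dYXPhi R0 R1 Rs \<sigma> N y x \<phi>) * ennreal (r y) \<partial>lborel_grid N)"
    using r by (intro nn_integral_noise_cellmean) simp
  finally show ?thesis .
qed

lemma expected_noise_ratio_ge_le:
  fixes r :: channel_statistic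
  assumes r_meas: "\<And>x \<phi>. r x \<phi> \<in> borel_measurable (lborel_grid N)" and r_mean: "chanexp N r \<le> 1"
  shows "(\<Sum>x\<in>inputs N. \<Sum>\<phi>\<in>patterns K N. prX q N x * prPhi p N \<phi> *
      measure (noise \<sigma> N) {z \<in> space (noise \<sigma> N). exp t \<le> r x \<phi> (\<lambda>c\<in>grid N. cellmean R0 R1 Rs \<phi> x c + z c)})
    \<le> exp (- t)"
    (is "(\<Sum>x\<in>inputs N. \<Sum>\<phi>\<in>patterns K N. ?w x \<phi> * measure ?Q (?bad x \<phi>)) \<le> _")
proof -
  interpret Q: prob_space ?Q
    by (rule prob_space_noise)
  have "ennreal (\<Sum>x\<in>inputs N. \<Sum>\<phi>\<in>patterns K N. ?w x \<phi> * measure ?Q (?bad x \<phi>))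
      = (\<Sum>x\<in>inputs N. \<Sum>\<phi>\<in>patterns K N. ennreal (?w x \<phi> * measure ?Q (?bad x \<phi>)))"
    by (simp add: mult_nonneg_nonneg prX_mult_prPhi_nonneg sum_nonneg flip: sum_ennreal)
  also have "\<dots> = (\<Sum>x\<in>inputs N. \<Sum>\<phi>\<in>patterns K N. ennreal (?w x \<phi>) * emeasure ?Q (?bad x \<phi>))"
    by (intro sum.cong refl) (simp add: Q.emeasure_eq_measure ennreal_mult prX_mult_prPhi_nonneg)
  also have "\<dots> \<le> (\<Sum>x\<in>inputs N. \<Sum>\<phi>\<in>patterns K N. ennreal (?w x \<phi>) * (ennreal (exp (- t)) *
      (\<integral>\<^sup>+y. ennreal (dYXPhi R0 R1 Rs \<sigma> N y x \<phi>) * ennreal (r x \<phi> y) \<partial>lborel_grid N)))"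
    by (intro sum_mono mult_left_mono emeasure_noise_ratio_ge r_meas) simp
  also have "\<dots> = ennreal (exp (- t)) * chanexp N r"
    unfolding chanexp_def by (simp add: sum_distrib_left mult.left_commute)
  also have "\<dots> \<le> ennreal (exp (- t))"
    using mult_left_mono[OF r_mean] by simp
  finally show ?thesis
    by (simp add: ennreal_le_iff)
qed

lemma chanprob_log_ratio_deviation:
  fixes r :: channel_statistic
  assumes KN: "K \<le> N^2" and n: "0 < n"
    and r_meas: "\<And>x \<phi>. r x \<phi> \<in> borel_measurable (lborel_grid N)"
    and r_cong: "\<And>x \<phi> y y'. (\<And>c. c \<in> grid N \<Longrightarrow> y c = y' c) \<Longrightarrow> r x \<phi> y = r x \<phi> y'"
    and r_lower: "\<And>x \<phi> y. x \<in> inputs N \<Longrightarrow> \<phi> \<in> patterns K N \<Longrightarrow> 0 < prPhi p N \<phi> \<Longrightarrow>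
        exp (- (e * n)) < r x \<phi> y"
    and r_mean: "chanexp N r \<le> 1"
  shows "\<bar>chanprob R0 R1 Rs \<sigma> q K p N (\<lambda>x \<phi> y. \<bar>ln (r x \<phi> y)\<bar> / n < e) - 1\<bar> \<le> exp (- (e * n))"
proof -
  let ?Q = "noise \<sigma> N"
  let ?w = "\<lambda>x \<phi>. prX q N x * prPhi p N \<phi>"
  let ?y = "\<lambda>x \<phi> z. \<lambda>c\<in>grid N. cellmean R0 R1 Rs \<phi> x c + z c"
  let ?good = "\<lambda>x \<phi>. {z \<in> space ?Q. \<bar>ln (r x \<phi> (?y x \<phi> z))\<bar> / n < e}"
  let ?bad = "\<lambda>x \<phi>. {z \<in> space ?Q. exp (e * n) \<le> r x \<phi> (?y x \<phi> z)}"
  interpret Q: prob_space ?Q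
    by (rule prob_space_noise)
  have meas: "(\<lambda>z. r x \<phi> (?y x \<phi> z)) \<in> borel_measurable ?Q" for x \<phi>
    by (rule measurable_compose[OF measurable_noise_shift r_meas])
  have good: "?good x \<phi> \<in> sets ?Q" and bad: "?bad x \<phi> \<in> sets ?Q" for x \<phi>
    using meas[of x \<phi>] by measurable
  have restrict: "r x \<phi> (\<lambda>c. cellmean R0 R1 Rs \<phi> x c + z c) = r x \<phi> (?y x \<phi> z)" for x \<phi> z
    by (rule r_cong) simp
  have "chanprob R0 R1 Rs \<sigma> q K p N (\<lambda>x \<phi> y. \<bar>ln (r x \<phi> y)\<bar> / n < e)
      = (\<Sum>x\<in>inputs N. \<Sum>\<phi>\<in>patterns K N. ?w x \<phi> * measure ?Q (?good x \<phi>))"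
    unfolding chanprob_def restrict ..
  then have "1 - chanprob R0 R1 Rs \<sigma> q K p N (\<lambda>x \<phi> y. \<bar>ln (r x \<phi> y)\<bar> / n < e)
      = (\<Sum>x\<in>inputs N. \<Sum>\<phi>\<in>patterns K N. ?w x \<phi> * measure ?Q (space ?Q - ?good x \<phi>))"
    by (simp add: Q.prob_compl[OF good] right_diff_distrib sum_subtractf sum_prX_mult_prPhi[OF KN])
  moreover have "\<dots> \<le> (\<Sum>x\<in>inputs N. \<Sum>\<phi>\<in>patterns K N. ?w x \<phi> * measure ?Q (?bad x \<phi>))"
  proof (intro sum_mono)
    fix x \<phi> assume x: "x \<in> inputs N" and \<phi>: "\<phi> \<in> patterns K N"
    show "?w x \<phi> * measure ?Q (space ?Q - ?good x \<phi>) \<le> ?w x \<phi> * measure ?Q (?bad x \<phi>)"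
    proof (cases "prPhi p N \<phi> = 0")
      case False
      with \<phi> have "0 < prPhi p N \<phi>"
        using prPhi_nonneg[OF \<phi>] by simp
      then have "space ?Q - ?good x \<phi> \<subseteq> ?bad x \<phi>"
        using x \<phi> n by (auto intro!: exp_le_if_abs_ln_ge r_lower simp: not_less pos_le_divide_eq mult.commute)
      then show ?thesis
        using bad prX_mult_prPhi_nonneg[OF \<phi>] by (intro mult_left_mono Q.finite_measure_mono) auto
    qed simp
  qed
  moreover have "(\<Sum>x\<in>inputs N. \<Sum>\<phi>\<in>patterns K N. ?w x \<phi> * measure ?Q (?bad x \<phi>)) \<le> exp (- (e * n))"
    using r_meas r_mean by (rule expected_noise_ratio_ge_le)
  moreover have "0 \<le> (\<Sum>x\<in>inputs N. \<Sum>\<phi>\<in>patterns K N. ?w x \<phi> * measure ?Q (space ?Q - ?good x \<phi>))"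
    by (intro sum_nonneg mult_nonneg_nonneg prX_mult_prPhi_nonneg) auto
  ultimately show ?thesis
    by linarith
qed

lemma chanprob_log_ratio_tendsto_1:
  fixes r :: "nat \<Rightarrow> channel_statistic"
  assumes e: "0 < e"
    and r_meas: "\<And>N x \<phi>. r N x \<phi> \<in> borel_measurable (lborel_grid N)"
    and r_cong: "\<And>N x \<phi> y y'. (\<And>c. c \<in> grid N \<Longrightarrow> y c = y' c) \<Longrightarrow> r N x \<phi> y = r N x \<phi> y'"
    and r_mean: "\<And>N. K \<le> N^2 \<Longrightarrow> chanexp N (r N) \<le> 1"
    and r_lower: "\<And>N x \<phi> y. 1 \<le> N \<Longrightarrow> x \<in> inputs N \<Longrightarrow> \<phi> \<in> patterns K N \<Longrightarrow> 0 < prPhi p N \<phi> \<Longrightarrow>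
        ratio_lb N \<le> r N x \<phi> y"
  shows "(\<lambda>N. chanprob R0 R1 Rs \<sigma> q K p N (\<lambda>x \<phi> y. \<bar>ln (r N x \<phi> y)\<bar> / real (N^2) < e)) \<longlonglongrightarrow> 1"
proof -
  have "0 < min q (1 - q)"
    using q_pos q_less_1 by simp
  with e pmin_pos have "\<forall>\<^sub>F N in sequentially. exp (- (e * real (N^2))) < ratio_lb N"
    unfolding ratio_lb_def by (rule eventually_exp_neg_quadratic_less)
  with eventually_ge_at_top[of K] eventually_ge_at_top[of 1]
  have "\<forall>\<^sub>F N in sequentially.
      norm (chanprob R0 R1 Rs \<sigma> q K p N (\<lambda>x \<phi> y. \<bar>ln (r N x \<phi> y)\<bar> / real (N^2) < e) - 1)
        \<le> exp (- (e * real (N^2)))"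
  proof eventually_elim
    case (elim N)
    have KN: "K \<le> N^2"
      using order_trans[OF elim(1) le_square] by (simp add: power2_eq_square)
    show ?case
      unfolding real_norm_def
    proof (rule chanprob_log_ratio_deviation[OF KN _ r_meas r_cong _ r_mean[OF KN]])
      show "0 < real (N^2)"
        using elim(2) by simp
      show "exp (- (e * real (N^2))) < r N x \<phi> y"
        if "x \<in> inputs N" "\<phi> \<in> patterns K N" "0 < prPhi p N \<phi>" for x \<phi> y
        using elim(3) r_lower[OF elim(2) that, of y] by linarith
    qed
  qed
  moreover have "(\<lambda>N. exp (- (e * real (N^2)))) \<longlonglongrightarrow> 0"
    using LIMSEQ_exp_neg_quadratic[OF e] by simp
  ultimately show ?thesis
    by (rule LIM_zero_cancel[OF Lim_null_comparison])
qed

end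

theorem lemma1:
  fixes R0 R1 Rs \<sigma> q \<epsilon> :: real and K :: nat and p :: "nat \<Rightarrow> real"
  assumes "0 < R1" and "R1 < R0" and "0 < Rs" and "0 < \<sigma>"
    and "0 < q" and "q < 1"
    and "\<forall>k\<le>K. 0 \<le> p k" and "(\<Sum>k\<le>K. p k) = 1"
    and "0 < \<epsilon>"
  shows "((\<lambda>N. chanprob R0 R1 Rs \<sigma> q K p N
            (\<lambda>x \<phi> y. \<bar>ln (dY R0 R1 Rs \<sigma> q K p N y / dYXsfPhi R0 R1 Rs \<sigma> q N y x \<phi>)\<bar>
                        / real (N^2) < \<epsilon> / 2))
           \<longlonglongrightarrow> 1)
      \<and> ((\<lambda>N. chanprob R0 R1 Rs \<sigma> q K p N
            (\<lambda>x \<phi> y. \<bar>ln (dYX R0 R1 Rs \<sigma> K p N y x / dYXPhi R0 R1 Rs \<sigma> N y x \<phi>)\<bar>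
                        / real (N^2) < \<epsilon> / 2))
           \<longlonglongrightarrow> 1)"
proof -
  interpret reram_channel R0 R1 Rs \<sigma> q K p
    using assms by unfold_locales auto
  have half: "0 < \<epsilon> / 2"
    using \<open>0 < \<epsilon>\<close> by simp
  show ?thesis (is "?sf \<and> ?x")
  proof
    show ?sf
      by (rule chanprob_log_ratio_tendsto_1[OF half])
         (auto intro!: borel_measurable_divide borel_measurable_dY borel_measurable_dYXsfPhi
           arg_cong2[where f="(/)"] dY_cong dYXsfPhi_cong chanexp_dY_div_dYXsfPhi[THEN eq_refl] dY_div_dYXsfPhi_ge)
    show ?x
      by (rule chanprob_log_ratio_tendsto_1[OF half])
         (auto intro!: borel_measurable_divide borel_measurable_dYX borel_measurable_dYXPhi
           arg_cong2[where f="(/)"] dYX_cong dYXPhi_cong chanexp_dYX_div_dYXPhi[THEN eq_refl] dYX_div_dYXPhi_ge)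
  qed
qed

end
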